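(* Let $\alpha,\beta,\lambda\in(0,1)$ with $\alpha+\beta+\lambda<1$, and for a function $f$ on $(0,\infty)$ let $$U_{\alpha,\beta,\lambda}[f](x)=x^{-\beta}\int_0^x \frac{y^{-\alpha} f(y)\,dy}{|x-y|^{\lambda}},\qquad x\in(0,\infty).$$ Let $p,q\in[1,\infty)$ and suppose there is a finite constant $K$ such that $$|U_{\alpha,\beta,\lambda}[f]|_q\le K\,|f|_p$$ for every function $f$ in the Schwartz space $S(\mathbb{R}_+)$. Then $$1+\frac1q=\frac1p+\alpha+\beta+\lambda.$$
   Context: For a measurable function $g$ on $\mathbb{R}_+=(0,\infty)$, $|g|_p=\left(\int_0^\infty |g(x)|^p\,dx\right)^{1/p}$ denotes the usual Lebesgue $L_p$ norm. $S(\mathbb{R}_+)$ denotes the Schwartz space of rapidly decreasing smooth functions on $\mathbb{R}_+$. *)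

theory Defs
  imports "HOL-Analysis.Analysis"
begin

text \<open>Schwartz space on R_+: restrictions to (0,inf) of real-valued smooth
  functions on R all of whose derivatives decay faster than any power.\<close>
definition schwartz_Rplus :: "(real \<Rightarrow> real) set" where
  "schwartz_Rplus = {f. (\<forall>k x. ((deriv ^^ k) f) differentiable (at x)) \<and>
      (\<forall>m k. \<exists>C. \<forall>x. \<bar>x\<bar> ^ m * \<bar>(deriv ^^ k) f x\<bar> \<le> C)}"

definition Lp_norm :: "real \<Rightarrow> (real \<Rightarrow> real) \<Rightarrow> ennreal" where
  "Lp_norm p g = (let I = (\<integral>\<^sup>+ x \<in> {0<..}. ennreal (\<bar>g x\<bar> powr p) \<partial>lborel)
     in if I = \<infinity> then \<infinity> else ennreal ((enn2real I) powr (1 / p)))"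

definition U_op :: "real \<Rightarrow> real \<Rightarrow> real \<Rightarrow> (real \<Rightarrow> real) \<Rightarrow> real \<Rightarrow> real" where
  "U_op \<alpha> \<beta> lam f x = x powr (-\<beta>) *
     (LINT y:{0<..<x}|lborel. y powr (-\<alpha>) * f y / \<bar>x - y\<bar> powr lam)"

end

theory Submission
  imports Defs "HOL-Probability.Distributions"
begin

text \<open>Both sides of the inequality scale by powers of \<open>t\<close> under the dilations
  \<open>f \<mapsto> f(t \<cdot> _)\<close>: the substitution \<open>y = s / t\<close> gives
  \<open>U[f(t \<cdot> _)](x) = t^(\<alpha> + \<beta> + \<lambda> - 1) U[f](t x)\<close>, hence
  \<open>|U[f(t \<cdot> _)]|_q = t^(\<alpha> + \<beta> + \<lambda> - 1 - 1/q) |U[f]|_q\<close>, while \<open>|f(t \<cdot> _)|_p = t^(-1/p) |f|_p\<close>.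
  For the Gaussian \<open>f\<close>, \<open>|f|_p\<close> is finite and \<open>U[f]\<close> is positive, so \<open>|U[f]|_q > 0\<close>.
  Testing the inequality on the dilates of the Gaussian therefore bounds
  \<open>t^(\<alpha> + \<beta> + \<lambda> - 1 - 1/q + 1/p)\<close> uniformly in \<open>t > 0\<close>, which forces the exponent to vanish.\<close>

section \<open>Gaussians in the Schwartz space\<close>

lemma power_mult_exp_neg_le:
  fixes y :: real
  assumes "0 \<le> y"
  shows "y ^ n * exp (- y) \<le> real n ^ n"
proof (cases "n = 0")
  case False
  have "(y / real n) ^ n \<le> (1 + y / real n) ^ n"
    using assms by (intro power_mono) auto
  also have "\<dots> \<le> exp y"
    using assms False by (intro exp_ge_one_plus_x_over_n_power_n) auto
  finally show ?thesis
    using False by (simp add: power_divide exp_minus field_simps)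
qed (use assms in simp)

lemma power_times_gaussian_bounded:
  fixes c :: real
  assumes "0 < c"
  shows "\<exists>B. \<forall>x. \<bar>x\<bar> ^ n * exp (- c * x\<^sup>2) \<le> B"
proof (intro exI allI)
  fix x :: real
  have "(c * x\<^sup>2) ^ n * exp (- (c * x\<^sup>2)) \<le> real n ^ n"
    using assms by (intro power_mult_exp_neg_le) auto
  then have gauss: "(x\<^sup>2) ^ n * exp (- c * x\<^sup>2) \<le> (real n / c) ^ n"
    using assms by (simp add: power_mult_distrib power_divide field_simps)
  have "\<bar>x\<bar> ^ n \<le> 1 + (x\<^sup>2) ^ n"
  proof (cases "\<bar>x\<bar> \<le> 1")
    case True
    then have "\<bar>x\<bar> ^ n \<le> 1" by (simp add: power_le_one)
    then show ?thesis by (simp add: add_increasing2)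
  next
    case False
    then have "\<bar>x\<bar> ^ n \<le> \<bar>x\<bar> ^ (2 * n)" by (intro power_increasing) auto
    then show ?thesis by (simp add: power_mult power2_abs)
  qed
  then have "\<bar>x\<bar> ^ n * exp (- c * x\<^sup>2) \<le> (1 + (x\<^sup>2) ^ n) * exp (- c * x\<^sup>2)"
    by (intro mult_right_mono) auto
  also have "\<dots> = exp (- c * x\<^sup>2) + (x\<^sup>2) ^ n * exp (- c * x\<^sup>2)"
    by (simp add: distrib_right)
  also have "\<dots> \<le> 1 + (real n / c) ^ n"
    using gauss assms by (simp add: add_mono)
  finally show "\<bar>x\<bar> ^ n * exp (- c * x\<^sup>2) \<le> 1 + (real n / c) ^ n" .
qed

lemma poly_times_gaussian_bounded:
  fixes c :: real
  assumes "0 < c"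
  shows "\<exists>C. \<forall>x. \<bar>x\<bar> ^ m * \<bar>poly P x * exp (- c * x\<^sup>2)\<bar> \<le> C"
proof -
  obtain B where B: "\<And>n x. \<bar>x\<bar> ^ n * exp (- c * x\<^sup>2) \<le> B n"
    using power_times_gaussian_bounded[OF assms] by metis
  show ?thesis
  proof (intro exI allI)
    fix x :: real
    have "\<bar>poly P x\<bar> \<le> (\<Sum>i\<le>degree P. \<bar>coeff P i\<bar> * \<bar>x\<bar> ^ i)"
      unfolding poly_altdef by (rule order_trans[OF sum_abs]) (simp add: abs_mult power_abs)
    then have "\<bar>x\<bar> ^ m * \<bar>poly P x * exp (- c * x\<^sup>2)\<bar>
        \<le> \<bar>x\<bar> ^ m * (\<Sum>i\<le>degree P. \<bar>coeff P i\<bar> * \<bar>x\<bar> ^ i) * exp (- c * x\<^sup>2)"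
      by (simp add: abs_mult mult.assoc[symmetric] mult_right_mono mult_left_mono)
    also have "\<dots> = (\<Sum>i\<le>degree P. \<bar>coeff P i\<bar> * (\<bar>x\<bar> ^ (m + i) * exp (- c * x\<^sup>2)))"
      by (simp add: sum_distrib_left sum_distrib_right power_add algebra_simps)
    also have "\<dots> \<le> (\<Sum>i\<le>degree P. \<bar>coeff P i\<bar> * B (m + i))"
      by (intro sum_mono mult_left_mono B) auto
    finally show "\<bar>x\<bar> ^ m * \<bar>poly P x * exp (- c * x\<^sup>2)\<bar> \<le> (\<Sum>i\<le>degree P. \<bar>coeff P i\<bar> * B (m + i))" .
  qed
qed

lemma has_real_derivative_poly_times_gaussian:
  fixes c :: real
  shows "((\<lambda>x. poly P x * exp (- c * x\<^sup>2)) has_real_derivative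
           poly (pderiv P - [:0, 2 * c:] * P) x * exp (- c * x\<^sup>2)) (at x)"
proof -
  have "((\<lambda>x. poly P x * exp (- c * x\<^sup>2)) has_real_derivative
      poly (pderiv P) x * exp (- c * x\<^sup>2) + poly P x * (exp (- c * x\<^sup>2) * (- c * (2 * x)))) (at x)"
    by (auto intro!: derivative_eq_intros poly_DERIV simp: power2_eq_square)
  then show ?thesis by (simp add: algebra_simps)
qed

lemma higher_deriv_gaussian:
  fixes c :: real
  shows "\<exists>P. (deriv ^^ k) (\<lambda>x. exp (- c * x\<^sup>2)) = (\<lambda>x. poly P x * exp (- c * x\<^sup>2))"
proof (induction k)
  case 0
  show ?case by (rule exI[of _ "[:1:]"]) simp
next
  case (Suc k)
  then obtain P where "(deriv ^^ k) (\<lambda>x. exp (- c * x\<^sup>2)) = (\<lambda>x. poly P x * exp (- c * x\<^sup>2))"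
    by blast
  then have "(deriv ^^ Suc k) (\<lambda>x. exp (- c * x\<^sup>2))
      = (\<lambda>x. poly (pderiv P - [:0, 2 * c:] * P) x * exp (- c * x\<^sup>2))"
    using DERIV_imp_deriv[OF has_real_derivative_poly_times_gaussian] by auto
  then show ?case by blast
qed

lemma gaussian_in_schwartz_Rplus:
  fixes c :: real
  assumes "0 < c"
  shows "(\<lambda>x. exp (- c * x\<^sup>2)) \<in> schwartz_Rplus"
  unfolding schwartz_Rplus_def
proof (intro CollectI conjI allI)
  fix k :: nat and x :: real
  obtain P where P: "(deriv ^^ k) (\<lambda>x. exp (- c * x\<^sup>2)) = (\<lambda>x. poly P x * exp (- c * x\<^sup>2))"
    using higher_deriv_gaussian by blast
  show "(deriv ^^ k) (\<lambda>x. exp (- c * x\<^sup>2)) differentiable at x"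
    unfolding P real_differentiable_def using has_real_derivative_poly_times_gaussian by blast
next
  fix m k :: nat
  obtain P where P: "(deriv ^^ k) (\<lambda>x. exp (- c * x\<^sup>2)) = (\<lambda>x. poly P x * exp (- c * x\<^sup>2))"
    using higher_deriv_gaussian by blast
  show "\<exists>C. \<forall>x. \<bar>x\<bar> ^ m * \<bar>(deriv ^^ k) (\<lambda>x. exp (- c * x\<^sup>2)) x\<bar> \<le> C"
    unfolding P using poly_times_gaussian_bounded[OF assms] by blast
qed

lemma Lp_norm_gaussian_less_top:
  fixes p :: real
  assumes "1 \<le> p"
  shows "Lp_norm p (\<lambda>x. exp (- x\<^sup>2)) < \<infinity>"
proof -
  have "integrable lborel (\<lambda>x. indicator {0..} x *\<^sub>R exp (- (x::real)\<^sup>2))"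
    using gaussian_moment_0 by (simp add: has_bochner_integral_iff)
  then have "(\<integral>\<^sup>+x. ennreal (indicator {0..} x * exp (- x\<^sup>2)) \<partial>lborel) < \<infinity>"
    by (simp add: integrable_iff_bounded)
  moreover have "(\<integral>\<^sup>+x \<in> {0<..}. ennreal (\<bar>exp (- x\<^sup>2)\<bar> powr p) \<partial>lborel)
      \<le> (\<integral>\<^sup>+x. ennreal (indicator {0..} x * exp (- x\<^sup>2)) \<partial>lborel)"
  proof (rule nn_integral_mono)
    fix x :: real
    have "exp (- x\<^sup>2) powr p = exp (- x\<^sup>2 * p)" by (rule exp_powr_real)
    also have "\<dots> \<le> exp (- x\<^sup>2)" using assms by (simp add: mult_le_cancel_left1)
    finally show "ennreal (\<bar>exp (- x\<^sup>2)\<bar> powr p) * indicator {0<..} x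
        \<le> ennreal (indicator {0..} x * exp (- x\<^sup>2))"
      by (auto simp: indicator_def intro!: ennreal_leI)
  qed
  ultimately show ?thesis
    unfolding Lp_norm_def Let_def by (auto simp: top_unique[symmetric] less_top)
qed

section \<open>Positivity of \<open>U\<close> and of the norms\<close>

lemma not_AE_lborel_eq_0:
  fixes f :: "real \<Rightarrow> 'a::zero"
  assumes "a < b" and "\<And>y. a < y \<Longrightarrow> y < b \<Longrightarrow> f y \<noteq> 0"
  shows "\<not> (AE y in lborel. f y = 0)"
proof
  assume "AE y in lborel. f y = 0"
  then have "AE y in lborel. y \<notin> {a<..<b}"
    by eventually_elim (use assms(2) in auto)
  then have "emeasure lborel {a<..<b} = 0"
    by (subst (asm) AE_iff_measurable[of "{a<..<b}"]) auto
  with \<open>a < b\<close> show False by simp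
qed

lemma set_integral_pos_Ioo:
  fixes h :: "real \<Rightarrow> real"
  assumes "set_integrable lborel {a<..<b} h" and "a < b"
    and "\<And>y. a < y \<Longrightarrow> y < b \<Longrightarrow> h y > 0"
  shows "(LINT y:{a<..<b}|lborel. h y) > 0"
proof -
  let ?g = "\<lambda>y. indicator {a<..<b} y *\<^sub>R h y"
  have "integral\<^sup>L lborel ?g \<ge> 0"
    using assms(3) by (intro Bochner_Integration.integral_nonneg) (auto simp: indicator_def less_imp_le)
  moreover have "\<not> (AE y in lborel. ?g y = 0)"
    by (rule not_AE_lborel_eq_0[OF \<open>a < b\<close>]) (use assms(3) in force)
  then have "integral\<^sup>L lborel ?g \<noteq> 0"
    using assms unfolding set_integrable_def
    by (subst integral_nonneg_eq_0_iff_AE) (auto simp: indicator_def less_imp_le)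
  ultimately show ?thesis unfolding set_lebesgue_integral_def by simp
qed

lemma set_integrable_Beta_kernel:
  fixes a b x :: real
  assumes a: "0 < a" and b: "0 < b" and x: "0 < x"
  shows "set_integrable lborel {0..x} (\<lambda>y. y powr (a - 1) * (x - y) powr (b - 1))"
proof -
  let ?B = "\<lambda>t. indicator {0..1} t * (t powr (a - 1) * (1 - t) powr (b - 1))"
  have "integrable lborel (\<lambda>y. x powr (a + b - 2) * ?B (0 + (1/x) * y))"
    using integrable_Beta[OF a b] x unfolding set_integrable_def
    by (intro integrable_mult_right lborel_integrable_real_affine) auto
  also have "(\<lambda>y. x powr (a + b - 2) * ?B (0 + (1/x) * y))
      = (\<lambda>y. indicator {0..x} y * (y powr (a - 1) * (x - y) powr (b - 1)))"
  proof
    fix y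
    show "x powr (a + b - 2) * ?B (0 + (1/x) * y)
        = indicator {0..x} y * (y powr (a - 1) * (x - y) powr (b - 1))"
    proof (cases "0 \<le> y \<and> y \<le> x")
      case True
      have "1 - y / x = (x - y) / x" using x by (simp add: field_simps)
      moreover have "x powr (a + b - 2) = x powr (a - 1) * x powr (b - 1)"
        by (simp add: powr_add[symmetric])
      ultimately show ?thesis using True x by (simp add: powr_divide indicator_def)
    qed (use x in \<open>auto simp: indicator_def field_simps\<close>)
  qed
  finally show ?thesis unfolding set_integrable_def by simp
qed

lemma set_integrable_U_op_integrand:
  fixes f :: "real \<Rightarrow> real"
  assumes a: "0 < a" "a < 1" and lam: "0 < lam" "lam < 1" and x: "0 < x"
    and [measurable]: "f \<in> borel_measurable borel" and bounded: "\<And>y. \<bar>f y\<bar> \<le> C"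
  shows "set_integrable lborel {0<..<x} (\<lambda>y. y powr (-a) * f y / \<bar>x - y\<bar> powr lam)"
proof (rule set_integrable_bound)
  have "set_integrable lborel {0<..<x} (\<lambda>y. y powr ((1 - a) - 1) * (x - y) powr ((1 - lam) - 1))"
    using set_integrable_Beta_kernel[of "1 - a" "1 - lam" x] a lam x
    by (rule_tac set_integrable_subset) auto
  then show "set_integrable lborel {0<..<x} (\<lambda>y. C * (y powr (-a) * (x - y) powr (-lam)))"
    by simp
  show "set_borel_measurable lborel {0<..<x} (\<lambda>y. y powr (-a) * f y / \<bar>x - y\<bar> powr lam)"
    unfolding set_borel_measurable_def by measurable
  have "\<bar>y powr (-a) * f y / \<bar>x - y\<bar> powr lam\<bar> \<le> \<bar>C * (y powr (-a) * (x - y) powr (-lam))\<bar>"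
    if "0 < y" "y < x" for y
  proof -
    have "\<bar>y powr (-a) * f y / \<bar>x - y\<bar> powr lam\<bar> = \<bar>f y\<bar> * (y powr (-a) * (x - y) powr (-lam))"
      using that by (simp add: abs_mult powr_minus divide_inverse)
    also have "\<dots> \<le> \<bar>C\<bar> * (y powr (-a) * (x - y) powr (-lam))"
      using bounded[of y] by (intro mult_right_mono) auto
    finally show ?thesis using that by (simp add: abs_mult)
  qed
  then show "AE y in lborel. y \<in> {0<..<x} \<longrightarrow>
      norm (y powr (-a) * f y / \<bar>x - y\<bar> powr lam) \<le> norm (C * (y powr (-a) * (x - y) powr (-lam)))"
    by (intro AE_I2) auto
qed

lemma U_op_pos:
  fixes f :: "real \<Rightarrow> real"
  assumes "0 < a" "a < 1" "0 < lam" "lam < 1" "0 < x"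
    and "f \<in> borel_measurable borel" and "\<And>y. \<bar>f y\<bar> \<le> C" and "\<And>y. 0 < y \<Longrightarrow> f y > 0"
  shows "U_op a b lam f x > 0"
  unfolding U_op_def
  by (intro mult_pos_pos set_integral_pos_Ioo set_integrable_U_op_integrand)
    (use assms in \<open>auto intro!: divide_pos_pos mult_pos_pos\<close>)

lemma Lp_norm_neq_0:
  fixes g :: "real \<Rightarrow> real"
  assumes [measurable]: "g \<in> borel_measurable borel" and nonzero: "\<And>x. 0 < x \<Longrightarrow> g x \<noteq> 0"
  shows "Lp_norm r g \<noteq> 0"
proof -
  define I where "I = (\<integral>\<^sup>+x \<in> {0<..}. ennreal (\<bar>g x\<bar> powr r) \<partial>lborel)"
  have "\<not> (AE x in lborel. ennreal (\<bar>g x\<bar> powr r) * indicator {0<..} x = 0)"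
    using nonzero by (intro not_AE_lborel_eq_0[of 0 1]) auto
  then have "I \<noteq> 0"
    unfolding I_def by (subst nn_integral_0_iff_AE) auto
  then show ?thesis
    unfolding Lp_norm_def Let_def I_def[symmetric]
    by (auto simp: enn2real_eq_0_iff)
qed

section \<open>Behaviour under dilations\<close>

lemma nn_integral_Ioi_dilation:
  fixes g :: "real \<Rightarrow> ennreal" and t :: real
  assumes [measurable]: "g \<in> borel_measurable borel" and t: "0 < t"
  shows "(\<integral>\<^sup>+x \<in> {0<..}. g (t * x) \<partial>lborel) = ennreal (1 / t) * (\<integral>\<^sup>+x \<in> {0<..}. g x \<partial>lborel)"
proof -
  have "(\<integral>\<^sup>+x \<in> {0<..}. g (t * x) \<partial>lborel)
      = ennreal \<bar>1 / t\<bar> * (\<integral>\<^sup>+x. g (t * (0 + 1 / t * x)) * indicator {0<..} (0 + 1 / t * x) \<partial>lborel)"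
    using t by (intro nn_integral_real_affine) auto
  also have "(\<lambda>x. g (t * (0 + 1 / t * x)) * indicator {0<..} (0 + 1 / t * x))
      = (\<lambda>x. g x * indicator {0<..} x)"
    using t by (auto simp: indicator_def zero_less_divide_iff)
  finally show ?thesis using t by simp
qed

lemma Lp_norm_dilation:
  fixes g h :: "real \<Rightarrow> real" and s t r :: real
  assumes [measurable]: "g \<in> borel_measurable borel" and "0 < s" "0 < t" "0 < r"
    and h: "\<And>x. 0 < x \<Longrightarrow> h x = s * g (t * x)"
  shows "Lp_norm r h = ennreal (s * t powr (-1 / r)) * Lp_norm r g"
proof -
  define Ig where "Ig = (\<integral>\<^sup>+x \<in> {0<..}. ennreal (\<bar>g x\<bar> powr r) \<partial>lborel)"
  have "(\<integral>\<^sup>+x \<in> {0<..}. ennreal (\<bar>h x\<bar> powr r) \<partial>lborel)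
      = (\<integral>\<^sup>+x \<in> {0<..}. ennreal (s powr r) * ennreal (\<bar>g (t * x)\<bar> powr r) \<partial>lborel)"
    using h \<open>0 < s\<close>
    by (intro nn_integral_cong) (auto simp: indicator_def abs_mult powr_mult ennreal_mult')
  also have "\<dots> = ennreal (s powr r) * ennreal (1 / t) * Ig"
    unfolding Ig_def
    using nn_integral_Ioi_dilation[of "\<lambda>x. ennreal (\<bar>g x\<bar> powr r)" t] \<open>0 < t\<close>
    by (simp add: nn_integral_cmult mult.assoc)
  also have "\<dots> = ennreal (s powr r / t) * Ig"
    using \<open>0 < t\<close> by (simp add: ennreal_mult'[symmetric])
  finally have Ih: "(\<integral>\<^sup>+x \<in> {0<..}. ennreal (\<bar>h x\<bar> powr r) \<partial>lborel) = ennreal (s powr r / t) * Ig" .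
  show ?thesis
  proof (cases "Ig = \<infinity>")
    case True
    then show ?thesis
      using \<open>0 < s\<close> \<open>0 < t\<close> unfolding Lp_norm_def Let_def Ih Ig_def[symmetric]
      by (simp add: ennreal_mult_eq_top_iff)
  next
    case False
    then obtain I where I: "Ig = ennreal I" "0 \<le> I" by (cases Ig) auto
    have "(s powr r / t * I) powr (1 / r) = s * t powr (-1 / r) * I powr (1 / r)"
      using assms I by (simp add: powr_mult powr_divide powr_powr powr_minus_divide)
    then show ?thesis
      using assms I unfolding Lp_norm_def Let_def Ih Ig_def[symmetric]
      by (simp add: ennreal_mult'[symmetric] ennreal_mult[symmetric])
  qed
qed

lemma U_op_altdef:
  "U_op a b lam f x = x powr (-b) *
     (\<integral>y. (if 0 < y \<and> y < x then y powr (-a) * f y / \<bar>x - y\<bar> powr lam else 0) \<partial>lborel)"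
  unfolding U_op_def set_lebesgue_integral_def
  by (intro arg_cong[where f = "\<lambda>z. x powr (-b) * z"] Bochner_Integration.integral_cong)
    (auto simp: indicator_def)

lemma borel_measurable_U_op:
  assumes [measurable]: "f \<in> borel_measurable borel"
  shows "U_op a b lam f \<in> borel_measurable borel"
proof -
  have "(\<lambda>x. \<integral>y. (if 0 < y \<and> y < x then y powr (-a) * f y / \<bar>x - y\<bar> powr lam else 0) \<partial>lborel)
      \<in> borel_measurable borel"
    by (rule lborel.borel_measurable_lebesgue_integral)
      (subst measurable_cong_sets[OF sets_pair_measure_cong[OF refl sets_lborel] refl], measurable)
  then show ?thesis unfolding U_op_altdef by measurable
qed

lemma U_op_dilation:
  fixes t x :: real
  assumes t: "0 < t" and x: "0 < x"
  shows "U_op a b lam (\<lambda>y. f (t * y)) x = t powr (a + b + lam - 1) * U_op a b lam f (t * x)"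
proof -
  define H where "H y = (if 0 < y \<and> y < x then y powr (-a) * f (t * y) / \<bar>x - y\<bar> powr lam else 0)" for y
  define G where "G s = (if 0 < s \<and> s < t * x then s powr (-a) * f s / \<bar>t * x - s\<bar> powr lam else 0)" for s
  have HG: "H (s / t) = t powr (a + lam) * G s" for s
  proof (cases "0 < s \<and> s < t * x")
    case True
    then have "0 < s / t" "s / t < x" using t by (auto simp: field_simps)
    moreover have "\<bar>x - s / t\<bar> powr lam = \<bar>t * x - s\<bar> powr lam / t powr lam"
      using t by (simp add: field_simps abs_div powr_divide)
    moreover have "(s / t) powr (-a) = s powr (-a) * t powr a"
      by (subst powr_divide) (use True t in \<open>auto simp: powr_minus divide_inverse\<close>)
    ultimately have "H (s / t) = (s powr (-a) * t powr a) * f s / (\<bar>t * x - s\<bar> powr lam / t powr lam)"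
      using t by (simp add: H_def)
    also have "\<dots> = t powr (a + lam) * G s"
      using True t by (simp add: G_def powr_add field_simps)
    finally show ?thesis .
  next
    case False
    then have "\<not> (0 < s / t \<and> s / t < x)" using t by (auto simp: field_simps)
    then have "H (s / t) = 0" unfolding H_def by (rule if_not_P)
    moreover have "G s = 0" unfolding G_def using False by (rule if_not_P)
    ultimately show ?thesis by simp
  qed
  have "(\<integral>y. H y \<partial>lborel) = \<bar>1 / t\<bar> *\<^sub>R (\<integral>s. H (0 + (1 / t) * s) \<partial>lborel)"
    using t by (intro lborel_integral_real_affine) simp
  also have "\<dots> = t powr (a + lam) / t * (\<integral>s. G s \<partial>lborel)"
    using t by (simp add: HG)
  finally have "x powr (-b) * (\<integral>y. H y \<partial>lborel)
      = (x powr (-b) * (t powr (a + lam) / t)) * (\<integral>s. G s \<partial>lborel)"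
    by simp
  also have "x powr (-b) * (t powr (a + lam) / t) = t powr (a + b + lam - 1) * (t * x) powr (-b)"
    using t x by (simp add: powr_mult powr_add powr_diff powr_minus field_simps)
  finally show ?thesis
    unfolding U_op_altdef H_def[symmetric] G_def[symmetric] by (simp only: mult.assoc)
qed

lemma Lp_norm_U_op_dilation:
  assumes "f \<in> borel_measurable borel" and "0 < t" "0 < r"
  shows "Lp_norm r (U_op a b lam (\<lambda>x. f (t * x)))
    = ennreal (t powr (a + b + lam - 1 - 1 / r)) * Lp_norm r (U_op a b lam f)"
  using assms
  by (subst Lp_norm_dilation[where s = "t powr (a + b + lam - 1)" and t = t])
    (auto simp: U_op_dilation powr_diff powr_minus_divide borel_measurable_U_op)

section \<open>The scaling argument\<close>

lemma powr_bounded_imp_exponent_eq_0: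
  fixes e M :: real
  assumes bound: "\<And>t. 0 < t \<Longrightarrow> t powr e \<le> M"
  shows "e = 0"
proof (rule ccontr)
  assume "e \<noteq> 0"
  define t where "t = (\<bar>M\<bar> + 1) powr (1 / e)"
  have "0 < t" by (simp add: t_def)
  moreover have "t powr e = \<bar>M\<bar> + 1"
    using \<open>e \<noteq> 0\<close> by (simp add: t_def powr_powr)
  ultimately show False using bound[of t] by linarith
qed

lemma exponent_eq_if_dilation_bound:
  fixes A B :: ennreal and a b K :: real
  assumes "A \<noteq> 0" "B \<noteq> \<infinity>"
    and bound: "\<And>t. 0 < t \<Longrightarrow> ennreal (t powr a) * A \<le> ennreal K * (ennreal (t powr b) * B)"
  shows "a = b"
proof -
  have "A \<noteq> \<infinity>"
    using bound[of 1] \<open>B \<noteq> \<infinity>\<close> by (auto simp: ennreal_mult_eq_top_iff top_unique)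
  with assms obtain A' B' where A': "A = ennreal A'" "0 < A'" and B': "B = ennreal B'" "0 \<le> B'"
    by (cases A; cases B) (auto simp: ennreal_eq_0_iff)
  have "t powr (a - b) \<le> max K 0 * B' / A'" if "0 < t" for t
  proof -
    have "ennreal K = ennreal (max K 0)"
      by (cases "K \<le> 0") (auto simp: ennreal_neg)
    then have "ennreal (t powr a * A') \<le> ennreal (max K 0 * (t powr b * B'))"
      using bound[OF that] A' B' by (simp add: ennreal_mult'[symmetric] ennreal_mult[symmetric])
    then have "t powr a * A' \<le> max K 0 * (t powr b * B')"
      using B' by (subst (asm) ennreal_le_iff) auto
    then show ?thesis
      using A' that by (simp add: powr_diff field_simps)
  qed
  then show ?thesis
    using powr_bounded_imp_exponent_eq_0[of "a - b"] by auto
qed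

theorem lemma2p1:
  fixes \<alpha> \<beta> lam p q :: real
  assumes "0 < \<alpha>" "\<alpha> < 1" "0 < \<beta>" "\<beta> < 1" "0 < lam" "lam < 1"
    and "\<alpha> + \<beta> + lam < 1"
    and "1 \<le> p" and "1 \<le> q"
    and "\<exists>K::real. \<forall>f \<in> schwartz_Rplus.
           Lp_norm q (U_op \<alpha> \<beta> lam f) \<le> ennreal K * Lp_norm p f"
  shows "1 + 1 / q = 1 / p + \<alpha> + \<beta> + lam"
proof -
  obtain K where K: "\<And>f. f \<in> schwartz_Rplus \<Longrightarrow> Lp_norm q (U_op \<alpha> \<beta> lam f) \<le> ennreal K * Lp_norm p f"
    using assms(10) by blast
  define F :: "real \<Rightarrow> real" where "F x = exp (- x\<^sup>2)" for x
  have [measurable]: "F \<in> borel_measurable borel" unfolding F_def by measurable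
  have "\<alpha> + \<beta> + lam - 1 - 1 / q = - 1 / p"
  proof (rule exponent_eq_if_dilation_bound)
    show "Lp_norm q (U_op \<alpha> \<beta> lam F) \<noteq> 0"
      using assms by (intro Lp_norm_neq_0 borel_measurable_U_op less_imp_neq[symmetric] U_op_pos[of _ _ _ _ 1])
        (auto simp: F_def)
    show "Lp_norm p F \<noteq> \<infinity>"
      using Lp_norm_gaussian_less_top[OF \<open>1 \<le> p\<close>] by (simp add: F_def[abs_def])
    fix t :: real assume "0 < t"
    have "(\<lambda>x. F (t * x)) \<in> schwartz_Rplus"
      using gaussian_in_schwartz_Rplus[of "t\<^sup>2"] \<open>0 < t\<close> by (simp add: F_def power_mult_distrib)
    from K[OF this] show "ennreal (t powr (\<alpha> + \<beta> + lam - 1 - 1 / q)) * Lp_norm q (U_op \<alpha> \<beta> lam F)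
        \<le> ennreal K * (ennreal (t powr (- 1 / p)) * Lp_norm p F)"
      using \<open>0 < t\<close> assms Lp_norm_U_op_dilation[of F t q \<alpha> \<beta> lam]
        Lp_norm_dilation[where s = 1 and t = t and g = F and r = p] by auto
  qed
  then show ?thesis by (simp add: field_simps)
qed

end
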